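(* Let $r\ge1$ and $z\in\mathbb{C}$, $z\ne0$. The algebra $\mathcal{P}'_r(z)$ is isomorphic to the algebra generated by elements $s_1,\dots,s_{r-1},p_1,\dots,p_r$ subject to the relations (a) $p_j^2=zp_j$, and $p_ip_j=p_jp_i$ for $i\ne j$; (b) $s_i^2=1$, $s_is_{i+1}s_i=s_{i+1}s_is_{i+1}$, and $s_is_j=s_js_i$ if $|i-j|>1$; (c) $s_ip_ip_{i+1}=p_ip_{i+1}s_i=p_ip_{i+1}$, $s_ip_is_i=p_{i+1}$, and $s_ip_j=p_js_i$ if $j\ne i,i+1$; the isomorphism sending $s_i$ to the permutation swapping $i$ and $i+1$, and $p_j$ to the identity map of $\{1,\dots,r\}\setminus\{j\}$.
   Context: A partial permutation of $\{1,\dots,r\}$ is a bijection $d:X\to Y$ between subsets $X=\mathrm{dom}(d)$, $Y=\mathrm{im}(d)$ of $\{1,\dots,r\}$; maps are written on the right and composed by $x(d_1\circ d_2)=(xd_1)d_2$. The algebra $\mathcal{P}'_r(z)$ has basis the set of partial permutations of $\{1,\dots,r\}$ and product $d_1d_2=z^{N}(d_1\circ d_2)$ where $N=r-|\mathrm{im}(d_1)\cup\mathrm{dom}(d_2)|$; equivalently, it is the subalgebra of the partition algebra $\mathcal{P}_r(z)$ spanned by the set-partition diagrams of $\{1,\dots,r,1',\dots,r'\}$ whose blocks have size $1$ or $2$, every $2$-block containing one element of $\{1,\dots,r\}$ and one of $\{1',\dots,r'\}$ (the block $\{i,j'\}$ corresponding to $i\mapsto j$). *)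

theory Defs
  imports Complex_Main
begin

definition pperm :: "nat \<Rightarrow> (nat \<rightharpoonup> nat) set" where
  "pperm r = {d. dom d \<subseteq> {1..r} \<and> ran d \<subseteq> {1..r} \<and> inj_on d (dom d)}"

text \<open>Composition with maps written on the right: x (d1 o d2) = (x d1) d2.\<close>
definition pcomp :: "(nat \<rightharpoonup> nat) \<Rightarrow> (nat \<rightharpoonup> nat) \<Rightarrow> (nat \<rightharpoonup> nat)" where
  "pcomp d1 d2 = d2 \<circ>\<^sub>m d1"

definition pexp :: "nat \<Rightarrow> (nat \<rightharpoonup> nat) \<Rightarrow> (nat \<rightharpoonup> nat) \<Rightarrow> nat" where
  "pexp r d1 d2 = r - card (ran d1 \<union> dom d2)"

section \<open>The algebra P'_r(z), as finitely supported coefficient functions\<close>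

definition PA :: "nat \<Rightarrow> ((nat \<rightharpoonup> nat) \<Rightarrow> complex) set" where
  "PA r = {f. \<forall>d. d \<notin> pperm r \<longrightarrow> f d = 0}"

definition pmult :: "nat \<Rightarrow> complex \<Rightarrow> ((nat \<rightharpoonup> nat) \<Rightarrow> complex)
    \<Rightarrow> ((nat \<rightharpoonup> nat) \<Rightarrow> complex) \<Rightarrow> ((nat \<rightharpoonup> nat) \<Rightarrow> complex)" where
  "pmult r z f g = (\<lambda>e. \<Sum>d1\<in>pperm r. \<Sum>d2\<in>pperm r.
      if pcomp d1 d2 = e then z ^ pexp r d1 d2 * f d1 * g d2 else 0)"

definition bas :: "(nat \<rightharpoonup> nat) \<Rightarrow> ((nat \<rightharpoonup> nat) \<Rightarrow> complex)" where
  "bas d = (\<lambda>e. if e = d then 1 else 0)"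

definition pid :: "nat \<Rightarrow> (nat \<rightharpoonup> nat)" where
  "pid r = (\<lambda>x. if x \<in> {1..r} then Some x else None)"

definition sperm :: "nat \<Rightarrow> nat \<Rightarrow> (nat \<rightharpoonup> nat)" where
  "sperm r i = (\<lambda>x. if x = i then Some (i+1) else if x = i+1 then Some i
                  else if x \<in> {1..r} then Some x else None)"

definition pproj :: "nat \<Rightarrow> nat \<Rightarrow> (nat \<rightharpoonup> nat)" where
  "pproj r j = (\<lambda>x. if x \<in> {1..r} \<and> x \<noteq> j then Some x else None)"

text \<open>mul: multiplication, one: unit, zs: multiplication by the scalar z,
  s i for 1 \<le> i \<le> r-1, p j for 1 \<le> j \<le> r.\<close>
definition rels :: "nat \<Rightarrow> ('b \<Rightarrow> 'b \<Rightarrow> 'b) \<Rightarrow> 'b \<Rightarrow> ('b \<Rightarrow> 'b)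
     \<Rightarrow> (nat \<Rightarrow> 'b) \<Rightarrow> (nat \<Rightarrow> 'b) \<Rightarrow> bool" where
  "rels r mul one zs s p \<longleftrightarrow>
     \<comment> \<open>(a)\<close>
     (\<forall>j\<in>{1..r}. mul (p j) (p j) = zs (p j)) \<and>
     (\<forall>i\<in>{1..r}. \<forall>j\<in>{1..r}. i \<noteq> j \<longrightarrow> mul (p i) (p j) = mul (p j) (p i)) \<and>
     \<comment> \<open>(b)\<close>
     (\<forall>i\<in>{1..r-1}. mul (s i) (s i) = one) \<and>
     (\<forall>i\<in>{1..r-1}. i + 1 \<le> r - 1 \<longrightarrow>
        mul (mul (s i) (s (i+1))) (s i) = mul (mul (s (i+1)) (s i)) (s (i+1))) \<and>
     (\<forall>i\<in>{1..r-1}. \<forall>j\<in>{1..r-1}. (i + 1 < j \<or> j + 1 < i) \<longrightarrow>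
        mul (s i) (s j) = mul (s j) (s i)) \<and>
     \<comment> \<open>(c)\<close>
     (\<forall>i\<in>{1..r-1}. mul (s i) (mul (p i) (p (i+1))) = mul (p i) (p (i+1)) \<and>
                    mul (mul (p i) (p (i+1))) (s i) = mul (p i) (p (i+1))) \<and>
     (\<forall>i\<in>{1..r-1}. mul (mul (s i) (p i)) (s i) = p (i+1)) \<and>
     (\<forall>i\<in>{1..r-1}. \<forall>j\<in>{1..r}. j \<noteq> i \<and> j \<noteq> i + 1 \<longrightarrow>
        mul (s i) (p j) = mul (p j) (s i))"

text \<open>A unital complex algebra is modelled as a ring_1 type together with a
  unital ring homomorphism from the complex numbers into its centre.\<close>
definition cplx_alg :: "(complex \<Rightarrow> 'a::ring_1) \<Rightarrow> bool" where
  "cplx_alg \<iota> \<longleftrightarrow> (\<forall>a b. \<iota> (a + b) = \<iota> a + \<iota> b) \<and> (\<forall>a b. \<iota> (a * b) = \<iota> a * \<iota> b)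
     \<and> \<iota> 1 = 1 \<and> (\<forall>a x. \<iota> a * x = x * \<iota> a)"

definition PA_hom :: "nat \<Rightarrow> complex \<Rightarrow> (complex \<Rightarrow> 'a::ring_1)
     \<Rightarrow> (((nat \<rightharpoonup> nat) \<Rightarrow> complex) \<Rightarrow> 'a) \<Rightarrow> bool" where
  "PA_hom r z \<iota> \<phi> \<longleftrightarrow>
     (\<forall>f\<in>PA r. \<forall>g\<in>PA r. \<phi> (\<lambda>e. f e + g e) = \<phi> f + \<phi> g) \<and>
     (\<forall>c. \<forall>f\<in>PA r. \<phi> (\<lambda>e. c * f e) = \<iota> c * \<phi> f) \<and>
     (\<forall>f\<in>PA r. \<forall>g\<in>PA r. \<phi> (pmult r z f g) = \<phi> f * \<phi> g) \<and>
     \<phi> (bas (pid r)) = 1"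

end

theory Submission
  imports Defs "HOL-Combinatorics.Permutations"
begin

text \<open>The Coxeter relations (b) make S a representation of the symmetric group: writing a
  permutation in the normal form obtained by peeling off the cycle that moves the image of the
  largest point, one checks that right multiplication by S i matches composition with the adjacent
  transposition, so the normal-form words multiply like the permutations. A partial permutation d is
  a permutation \<sigma> extending d followed by the identity on ran d, and d is sent to the word of \<sigma>
  times the product of the P j over the points j missing from ran d. This does not depend on \<sigma>,
  because by (c) a permutation of the missing points is absorbed by that product; commuting the
  P j past the words by (c) and collapsing repeated P j by (a) then yields exactly the factor z^N
  of the product in P'_r(z). Uniqueness holds since every basis element is a product of an
  S-word and of P j's.\<close>

definition adj_swap :: "nat \<Rightarrow> nat \<Rightarrow> nat" where
  "adj_swap i = Transposition.transpose i (Suc i)"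

lemma adj_swap_permutes: "1 \<le> i \<Longrightarrow> i < n \<Longrightarrow> adj_swap i permutes {1..n}"
  unfolding adj_swap_def by (rule permutes_swap_id) auto

lemma transpose_Suc_conv:
  "a < b \<Longrightarrow> Transposition.transpose a (Suc b) = adj_swap b \<circ> Transposition.transpose a b \<circ> adj_swap b"
  by (auto simp: fun_eq_iff adj_swap_def Transposition.transpose_def)

lemma transpose_comp_closed_if_adj_swap_comp_closed:
  assumes adj_swap: "\<And>p i. p permutes {1..n} \<Longrightarrow> 1 \<le> i \<Longrightarrow> i < n \<Longrightarrow> P p \<Longrightarrow> P (adj_swap i \<circ> p)"
    and "1 \<le> a" "a < b" "b \<le> n" "p permutes {1..n}" "P p"
  shows "P (Transposition.transpose a b \<circ> p)"
  using assms(2-)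
proof (induction b arbitrary: p)
  case 0
  then show ?case by simp
next
  case (Suc b)
  show ?case
  proof (cases "b = a")
    case True
    have "P (adj_swap a \<circ> p)" using adj_swap[of p a] Suc.prems by auto
    then show ?thesis using True by (simp only: adj_swap_def)
  next
    case False
    then have b: "1 \<le> b" "b < n" and ab: "a < b" using Suc.prems by auto
    have p': "adj_swap b \<circ> p permutes {1..n}"
      using permutes_compose[OF Suc.prems(4) adj_swap_permutes[OF b]] .
    have t: "Transposition.transpose a b \<circ> (adj_swap b \<circ> p) permutes {1..n}"
      using permutes_compose[OF p' permutes_swap_id, of a b] ab b Suc.prems by auto
    have "P (Transposition.transpose a b \<circ> (adj_swap b \<circ> p))"
      by (rule Suc.IH[OF Suc.prems(1) ab less_imp_le[OF b(2)] p' adj_swap[OF Suc.prems(4) b Suc.prems(5)]])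
    then have "P (adj_swap b \<circ> (Transposition.transpose a b \<circ> (adj_swap b \<circ> p)))"
      using adj_swap[OF t b] by simp
    then show ?thesis by (simp only: transpose_Suc_conv[OF ab] o_assoc)
  qed
qed

lemma permutes_adj_swap_induct [consumes 1, case_names id adj_swap]:
  assumes \<sigma>: "\<sigma> permutes {1..n}"
    and id: "P id"
    and adj_swap: "\<And>p i. p permutes {1..n} \<Longrightarrow> 1 \<le> i \<Longrightarrow> i < n \<Longrightarrow> P p \<Longrightarrow> P (adj_swap i \<circ> p)"
  shows "P \<sigma>"
  using \<sigma> finite_atLeastAtMost
proof (induction rule: permutes_induct)
  case id
  show ?case by (rule assms(2))
next
  case (swap a b p)
  have ab: "1 \<le> a" "a \<le> n" "1 \<le> b" "b \<le> n" using swap by auto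
  consider "a < b" | "b < a" using \<open>a \<noteq> b\<close> by linarith
  then show ?case
  proof cases
    case 1
    show ?thesis
      using adj_swap ab(1) 1 ab(4) swap(4,5) by (rule transpose_comp_closed_if_adj_swap_comp_closed)
  next
    case 2
    have "P (Transposition.transpose b a \<circ> p)"
      using adj_swap ab(3) 2 ab(2) swap(4,5) by (rule transpose_comp_closed_if_adj_swap_comp_closed)
    then show ?thesis by (simp only: transpose_commute)
  qed
qed

definition cyc_to_top :: "nat \<Rightarrow> nat \<Rightarrow> nat \<Rightarrow> nat" where
  "cyc_to_top m k x = (if x = k then m else if k < x \<and> x \<le> m then x - 1 else x)"

lemma cyc_to_top_self: "cyc_to_top m m = id"
  by (auto simp: fun_eq_iff cyc_to_top_def)

lemma cyc_to_top_Suc_adj_swap: "k < m \<Longrightarrow> cyc_to_top m (Suc k) \<circ> adj_swap k = cyc_to_top m k"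
  by (auto simp: fun_eq_iff cyc_to_top_def adj_swap_def Transposition.transpose_def)

lemma cyc_to_top_adj_swap: "Suc k \<le> m \<Longrightarrow> cyc_to_top m k \<circ> adj_swap k = cyc_to_top m (Suc k)"
  by (auto simp: fun_eq_iff cyc_to_top_def adj_swap_def Transposition.transpose_def)

lemma cyc_to_top_adj_swap_commute:
  "Suc i < k \<Longrightarrow> k \<le> m \<Longrightarrow> cyc_to_top m k \<circ> adj_swap i = adj_swap i \<circ> cyc_to_top m k"
  by (auto simp: fun_eq_iff cyc_to_top_def adj_swap_def Transposition.transpose_def)

lemma cyc_to_top_adj_swap_shift:
  "k < i \<Longrightarrow> Suc i \<le> m \<Longrightarrow> cyc_to_top m k \<circ> adj_swap i = adj_swap (i - 1) \<circ> cyc_to_top m k"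
  by (auto simp: fun_eq_iff cyc_to_top_def adj_swap_def Transposition.transpose_def)

lemma cyc_to_top_permutes: "1 \<le> k \<Longrightarrow> k \<le> m \<Longrightarrow> cyc_to_top m k permutes {1..m}"
proof (induction "m - k" arbitrary: k)
  case 0
  then have "m = k" by simp
  then show ?case by (simp only: cyc_to_top_self permutes_id)
next
  case (Suc d)
  then have "cyc_to_top m (Suc k) \<circ> adj_swap k permutes {1..m}"
    by (intro permutes_compose[OF adj_swap_permutes]) auto
  then show ?case using Suc.hyps(2) by (simp add: cyc_to_top_Suc_adj_swap)
qed

lemma permutes_Suc_reduce:
  assumes "\<sigma> permutes {1..Suc n}"
  shows "cyc_to_top (Suc n) (\<sigma> (Suc n)) \<circ> \<sigma> permutes {1..n}" and "\<sigma> (Suc n) \<in> {1..Suc n}"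
proof -
  show k: "\<sigma> (Suc n) \<in> {1..Suc n}" using permutes_in_image[OF assms] by simp
  have "cyc_to_top (Suc n) (\<sigma> (Suc n)) \<circ> \<sigma> permutes {1..Suc n}"
    using permutes_compose[OF assms cyc_to_top_permutes] k by auto
  then show "cyc_to_top (Suc n) (\<sigma> (Suc n)) \<circ> \<sigma> permutes {1..n}"
    by (rule permutes_superset) (auto simp: cyc_to_top_def le_Suc_eq)
qed

definition cycle_word :: "(nat \<Rightarrow> 'a::monoid_mult) \<Rightarrow> nat \<Rightarrow> nat \<Rightarrow> 'a" where
  "cycle_word S m k = prod_list (map S (rev [k..<m]))"

lemma cycle_word_self [simp]: "cycle_word S m m = 1"
  by (simp add: cycle_word_def)

lemma cycle_word_Suc: "k < m \<Longrightarrow> cycle_word S m k = cycle_word S m (Suc k) * S k"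
  by (simp add: cycle_word_def upt_conv_Cons)

text \<open>Normal form: \<sigma> = c \<circ> \<sigma>' with \<sigma>' fixing n and c the inverse of cyc_to_top n (\<sigma> n).
  Maps act on the right, so c contributes the word S (n-1) \<cdots> S (\<sigma> n) as the last factor.\<close>
primrec perm_rep :: "(nat \<Rightarrow> 'a::monoid_mult) \<Rightarrow> nat \<Rightarrow> (nat \<Rightarrow> nat) \<Rightarrow> 'a" where
  "perm_rep S 0 \<sigma> = 1"
| "perm_rep S (Suc n) \<sigma> =
     perm_rep S n (cyc_to_top (Suc n) (\<sigma> (Suc n)) \<circ> \<sigma>) * cycle_word S (Suc n) (\<sigma> (Suc n))"

lemma perm_rep_id [simp]: "perm_rep S n id = 1"
  by (induction n) (simp_all add: cyc_to_top_self)

locale coxeter_gens =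
  fixes r :: nat and S :: "nat \<Rightarrow> 'a::monoid_mult"
  assumes S_sq: "1 \<le> i \<Longrightarrow> i < r \<Longrightarrow> S i * S i = 1"
    and S_braid: "1 \<le> i \<Longrightarrow> Suc i < r \<Longrightarrow> S i * S (Suc i) * S i = S (Suc i) * S i * S (Suc i)"
    and S_far: "1 \<le> i \<Longrightarrow> Suc i < j \<Longrightarrow> j < r \<Longrightarrow> S i * S j = S j * S i"
begin

lemma cycle_word_commute:
  "1 \<le> j \<Longrightarrow> Suc j < k \<Longrightarrow> m \<le> r \<Longrightarrow> cycle_word S m k * S j = S j * cycle_word S m k"
proof (induction "m - k" arbitrary: k)
  case 0
  then show ?case by (simp add: cycle_word_def)
next
  case (Suc d)
  then have "k < m" by simp
  then have "cycle_word S m k * S j = cycle_word S m (Suc k) * (S k * S j)"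
    by (simp add: cycle_word_Suc mult.assoc)
  also have "S k * S j = S j * S k" using S_far[of j k] Suc by auto
  also have "cycle_word S m (Suc k) * (S j * S k) = S j * cycle_word S m (Suc k) * S k"
    using Suc by (simp add: mult.assoc[symmetric])
  finally show ?case using \<open>k < m\<close> by (simp add: cycle_word_Suc mult.assoc)
qed

lemma cycle_word_braid:
  "1 \<le> k \<Longrightarrow> k < i \<Longrightarrow> i < m \<Longrightarrow> m \<le> r \<Longrightarrow> cycle_word S m k * S i = S (i - 1) * cycle_word S m k"
proof (induction "m - k" arbitrary: k)
  case 0
  then show ?case by simp
next
  case (Suc d)
  then have km: "k < m" by simp
  show ?case
  proof (cases "i = Suc k")
    case True
    have w: "cycle_word S m k = cycle_word S m (Suc (Suc k)) * S (Suc k) * S k"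
      using Suc True by (simp add: cycle_word_Suc[of k] cycle_word_Suc[of "Suc k"])
    have "cycle_word S m k * S i = cycle_word S m (Suc (Suc k)) * (S (Suc k) * S k * S (Suc k))"
      by (simp add: w True mult.assoc)
    also have "S (Suc k) * S k * S (Suc k) = S k * S (Suc k) * S k"
      using S_braid[of k] Suc True by simp
    also have "cycle_word S m (Suc (Suc k)) * (S k * S (Suc k) * S k)
        = S k * cycle_word S m (Suc (Suc k)) * S (Suc k) * S k"
      using cycle_word_commute[of k "Suc (Suc k)" m] Suc by (simp add: mult.assoc[symmetric])
    finally show ?thesis by (simp add: w True mult.assoc)
  next
    case False
    then have ki: "Suc k < i" using Suc by simp
    have "cycle_word S m k * S i = cycle_word S m (Suc k) * (S k * S i)"
      by (simp add: cycle_word_Suc[OF km] mult.assoc)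
    also have "S k * S i = S i * S k" using S_far[of k i] Suc ki by auto
    also have "cycle_word S m (Suc k) * (S i * S k) = S (i - 1) * cycle_word S m (Suc k) * S k"
      using Suc ki by (simp add: mult.assoc[symmetric])
    finally show ?thesis by (simp add: cycle_word_Suc[OF km] mult.assoc)
  qed
qed

lemma cycle_word_adj_swap:
  assumes k: "1 \<le> k" "k \<le> m" and m: "m \<le> r" and i: "1 \<le> i" "i < m"
  obtains (absorb) "cyc_to_top m (adj_swap i k) \<circ> adj_swap i = cyc_to_top m k"
      "cycle_word S m k * S i = cycle_word S m (adj_swap i k)"
  | (pass) j where "1 \<le> j" "j < m - 1" "adj_swap i k = k"
      "cyc_to_top m k \<circ> adj_swap i = adj_swap j \<circ> cyc_to_top m k"
      "cycle_word S m k * S i = S j * cycle_word S m k"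
proof -
  consider "Suc i < k" | "k = Suc i" | "k = i" | "k < i" by linarith
  then show thesis
  proof cases
    case 1
    then show thesis
      using pass[of i] cycle_word_commute[of i k m] cyc_to_top_adj_swap_commute[of i k m] k m i
      by (simp add: adj_swap_def)
  next
    case 2
    then show thesis
      using absorb cycle_word_Suc[of i m S] cyc_to_top_adj_swap[of i m] k
      by (simp add: adj_swap_def)
  next
    case 3
    have "cycle_word S m k * S i = cycle_word S m (Suc k) * (S k * S k)"
      using 3 i by (simp add: cycle_word_Suc mult.assoc)
    then show thesis
      using absorb cyc_to_top_Suc_adj_swap[of k m] S_sq[of k] 3 i m
      by (simp add: adj_swap_def)
  next
    case 4
    then show thesis
      using pass[of "i - 1"] cycle_word_braid[of k i m] cyc_to_top_adj_swap_shift[of k i m] k m i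
      by (simp add: adj_swap_def)
  qed
qed

lemma perm_rep_adj_swap:
  "n \<le> r \<Longrightarrow> \<sigma> permutes {1..n} \<Longrightarrow> 1 \<le> i \<Longrightarrow> i < n
     \<Longrightarrow> perm_rep S n (adj_swap i \<circ> \<sigma>) = perm_rep S n \<sigma> * S i"
proof (induction n arbitrary: \<sigma> i)
  case 0
  then show ?case by simp
next
  case (Suc n)
  define k where "k = \<sigma> (Suc n)"
  define \<sigma>' where "\<sigma>' = cyc_to_top (Suc n) k \<circ> \<sigma>"
  have \<sigma>': "\<sigma>' permutes {1..n}" and k: "1 \<le> k" "k \<le> Suc n"
    using permutes_Suc_reduce[OF Suc.prems(2)] by (auto simp: \<sigma>'_def k_def)
  have lhs: "perm_rep S (Suc n) \<sigma> * S i = perm_rep S n \<sigma>' * (cycle_word S (Suc n) k * S i)"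
    by (simp add: \<sigma>'_def k_def mult.assoc)
  have "(adj_swap i \<circ> \<sigma>) (Suc n) = adj_swap i k" by (simp add: k_def)
  then have rhs: "perm_rep S (Suc n) (adj_swap i \<circ> \<sigma>) = perm_rep S n
      (cyc_to_top (Suc n) (adj_swap i k) \<circ> adj_swap i \<circ> \<sigma>) * cycle_word S (Suc n) (adj_swap i k)"
    by (simp only: perm_rep.simps o_assoc)
  from k Suc.prems(1) Suc.prems(3,4) show ?case
  proof (cases rule: cycle_word_adj_swap)
    case absorb
    have "perm_rep S (Suc n) (adj_swap i \<circ> \<sigma>) = perm_rep S n \<sigma>' * cycle_word S (Suc n) (adj_swap i k)"
      using rhs absorb(1) by (simp only: \<sigma>'_def)
    also have "\<dots> = perm_rep S (Suc n) \<sigma> * S i" using lhs absorb(2) by (simp only:)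
    finally show ?thesis .
  next
    case (pass j)
    have "perm_rep S (Suc n) (adj_swap i \<circ> \<sigma>) = perm_rep S n (adj_swap j \<circ> \<sigma>') * cycle_word S (Suc n) k"
      using rhs pass(3,4) by (simp only: \<sigma>'_def o_assoc)
    also have "perm_rep S n (adj_swap j \<circ> \<sigma>') = perm_rep S n \<sigma>' * S j"
      by (rule Suc.IH[OF _ \<sigma>']) (use Suc.prems(1) pass(1,2) in auto)
    also have "perm_rep S n \<sigma>' * S j * cycle_word S (Suc n) k = perm_rep S (Suc n) \<sigma> * S i"
      using lhs pass(5) by (simp only: mult.assoc)
    finally show ?thesis .
  qed
qed

lemma perm_rep_adj_swap_self: "1 \<le> i \<Longrightarrow> i < r \<Longrightarrow> perm_rep S r (adj_swap i) = S i"
  using perm_rep_adj_swap[of r id i] by (simp add: permutes_id)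

lemma perm_rep_comp:
  assumes \<sigma>: "\<sigma> permutes {1..r}" and \<tau>: "\<tau> permutes {1..r}"
  shows "perm_rep S r (\<tau> \<circ> \<sigma>) = perm_rep S r \<sigma> * perm_rep S r \<tau>"
  using \<tau>
proof (induction rule: permutes_adj_swap_induct)
  case id
  show ?case by (simp only: id_comp perm_rep_id mult_1_right)
next
  case (adj_swap p i)
  have "perm_rep S r (adj_swap i \<circ> p \<circ> \<sigma>) = perm_rep S r (p \<circ> \<sigma>) * S i"
    using perm_rep_adj_swap[OF _ permutes_compose[OF \<sigma> adj_swap(1)]] adj_swap(2,3)
    by (simp add: o_assoc)
  also have "\<dots> = perm_rep S r \<sigma> * perm_rep S r (adj_swap i \<circ> p)"
    using adj_swap(4) perm_rep_adj_swap[OF order_refl adj_swap(1-3)] by (simp only: mult.assoc)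
  finally show ?case .
qed

end

locale rook_gens = coxeter_gens r S for r :: nat and S :: "nat \<Rightarrow> 'a::monoid_mult" +
  fixes P :: "nat \<Rightarrow> 'a" and c :: 'a
  assumes c_central: "c * x = x * c"
    and P_idem: "j \<in> {1..r} \<Longrightarrow> P j * P j = c * P j"
    and P_commute: "i \<in> {1..r} \<Longrightarrow> j \<in> {1..r} \<Longrightarrow> P i * P j = P j * P i"
    and S_P_P: "1 \<le> i \<Longrightarrow> i < r \<Longrightarrow> S i * (P i * P (Suc i)) = P i * P (Suc i)"
    and S_P_S: "1 \<le> i \<Longrightarrow> i < r \<Longrightarrow> S i * P i * S i = P (Suc i)"
    and S_P_far: "1 \<le> i \<Longrightarrow> i < r \<Longrightarrow> j \<in> {1..r} \<Longrightarrow> j \<noteq> i \<Longrightarrow> j \<noteq> Suc i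
      \<Longrightarrow> S i * P j = P j * S i"
begin

lemma P_mult_S:
  assumes a: "a \<in> {1..r}" and i: "1 \<le> i" "i < r"
  shows "P a * S i = S i * P (adj_swap i a)"
proof -
  have sq: "S i * S i = 1" using S_sq i by simp
  consider "a = i" | "a = Suc i" | "a \<noteq> i \<and> a \<noteq> Suc i" by blast
  then show ?thesis
  proof cases
    case 1
    have "S i * (S i * P i * S i) = S i * P (Suc i)" using S_P_S[OF i] by simp
    then have "P i * S i = S i * P (Suc i)" by (simp add: mult.assoc[symmetric] sq)
    then show ?thesis using 1 by (simp add: adj_swap_def)
  next
    case 2
    have "S i * P i * S i * S i = P (Suc i) * S i" using S_P_S[OF i] by simp
    then have "S i * P i = P (Suc i) * S i" by (simp add: mult.assoc sq)
    then show ?thesis using 2 by (simp add: adj_swap_def)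
  next
    case 3
    then show ?thesis using S_P_far[OF i a] by (simp add: adj_swap_def)
  qed
qed

lemma P_perm_rep:
  assumes "\<sigma> permutes {1..r}" and "a \<in> {1..r}"
  shows "P a * perm_rep S r \<sigma> = perm_rep S r \<sigma> * P (\<sigma> a)"
  using assms
proof (induction arbitrary: a rule: permutes_adj_swap_induct)
  case id
  show ?case using perm_rep_id[of S r] by (simp add: id_def)
next
  case (adj_swap p i)
  have pa: "p a \<in> {1..r}" using permutes_in_image[OF adj_swap(1)] adj_swap(5) by simp
  have "P a * perm_rep S r (adj_swap i \<circ> p) = P a * perm_rep S r p * S i"
    using perm_rep_adj_swap[OF order_refl adj_swap(1-3)] by (simp only: mult.assoc)
  also have "\<dots> = perm_rep S r p * (P (p a) * S i)"
    using adj_swap(4)[OF adj_swap(5)] by (simp only: mult.assoc)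
  also have "\<dots> = perm_rep S r (adj_swap i \<circ> p) * P ((adj_swap i \<circ> p) a)"
    using P_mult_S[OF pa adj_swap(2,3)] perm_rep_adj_swap[OF order_refl adj_swap(1-3)]
    by (simp only: mult.assoc comp_apply)
  finally show ?case .
qed

lemma c_power_central: "x * c ^ n = c ^ n * x"
proof (induction n)
  case 0
  then show ?case by simp
next
  case (Suc n)
  have "x * c ^ Suc n = x * c * c ^ n" by (simp add: mult.assoc)
  also have "\<dots> = c * (x * c ^ n)" by (simp add: c_central[of x, symmetric] mult.assoc[symmetric])
  finally show ?case by (simp add: Suc mult.assoc)
qed

definition Pprod :: "nat set \<Rightarrow> 'a" where
  "Pprod T = prod_list (map P (sorted_list_of_set T))"

lemma prod_list_P_insort:
  "set xs \<subseteq> {1..r} \<Longrightarrow> x \<in> {1..r} \<Longrightarrow> prod_list (map P (insort x xs)) = P x * prod_list (map P xs)"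
proof (induction xs)
  case Nil
  then show ?case by simp
next
  case (Cons y ys)
  have "P y * (P x * prod_list (map P ys)) = P x * (P y * prod_list (map P ys))"
    using P_commute[of y x] Cons.prems by (simp add: mult.assoc[symmetric])
  then show ?case using Cons by auto
qed

lemma Pprod_empty [simp]: "Pprod {} = 1"
  by (simp add: Pprod_def)

lemma Pprod_insert:
  "T \<subseteq> {1..r} \<Longrightarrow> x \<in> {1..r} \<Longrightarrow> x \<notin> T \<Longrightarrow> Pprod (insert x T) = P x * Pprod T"
  unfolding Pprod_def
  by (simp add: sorted_list_of_set_insert_remove prod_list_P_insort finite_subset)

lemma P_Pprod_absorb:
  assumes "T \<subseteq> {1..r}" and "x \<in> T"
  shows "P x * Pprod T = c * Pprod T"
proof -
  have x: "x \<in> {1..r}" using assms by auto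
  have "T - {x} \<subseteq> {1..r}" using assms by auto
  then have "Pprod T = P x * Pprod (T - {x})"
    using Pprod_insert[of "T - {x}" x] assms x by (simp add: insert_absorb)
  then show ?thesis by (simp add: mult.assoc[symmetric] P_idem[OF x])
qed

lemma Pprod_mult:
  assumes "A \<subseteq> {1..r}" and "B \<subseteq> {1..r}"
  shows "Pprod A * Pprod B = c ^ card (A \<inter> B) * Pprod (A \<union> B)"
proof -
  have "finite A" using assms(1) finite_subset by blast
  from this assms show ?thesis
  proof (induction A rule: finite_induct)
    case empty
    then show ?case by simp
  next
    case (insert a A)
    have "Pprod (insert a A) * Pprod B = P a * (c ^ card (A \<inter> B) * Pprod (A \<union> B))"
      using insert by (simp add: Pprod_insert mult.assoc)
    also have "\<dots> = c ^ card (A \<inter> B) * (P a * Pprod (A \<union> B))"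
      by (simp add: mult.assoc[symmetric] c_power_central)
    finally have IH: "Pprod (insert a A) * Pprod B = c ^ card (A \<inter> B) * (P a * Pprod (A \<union> B))" .
    show ?case
    proof (cases "a \<in> B")
      case True
      then have "card (insert a A \<inter> B) = Suc (card (A \<inter> B))" "insert a A \<union> B = A \<union> B"
        using insert by auto
      moreover have "P a * Pprod (A \<union> B) = c * Pprod (A \<union> B)"
        using P_Pprod_absorb[of "A \<union> B" a] insert True by simp
      ultimately show ?thesis using IH by (simp add: mult.assoc[symmetric] power_commutes)
    next
      case False
      then have "insert a A \<inter> B = A \<inter> B" by auto
      then show ?thesis using IH Pprod_insert[of "A \<union> B" a] insert False by simp
    qed
  qed
qed

lemma Pprod_perm_rep:
  assumes "T \<subseteq> {1..r}" and \<sigma>: "\<sigma> permutes {1..r}"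
  shows "Pprod T * perm_rep S r \<sigma> = perm_rep S r \<sigma> * Pprod (\<sigma> ` T)"
proof -
  have "finite T" using assms(1) finite_subset by blast
  from this assms(1) show ?thesis
  proof (induction T rule: finite_induct)
    case empty
    then show ?case by simp
  next
    case (insert x T)
    have x: "x \<in> {1..r}" "\<sigma> x \<in> {1..r}" using insert.prems permutes_in_image[OF \<sigma>] by auto
    have \<sigma>T: "\<sigma> ` T \<subseteq> {1..r}" "\<sigma> x \<notin> \<sigma> ` T"
      using insert permutes_in_image[OF \<sigma>] permutes_inj[OF \<sigma>] by (auto simp: inj_eq)
    have "Pprod (insert x T) * perm_rep S r \<sigma> = P x * perm_rep S r \<sigma> * Pprod (\<sigma> ` T)"
      using insert by (simp add: Pprod_insert mult.assoc)
    also have "\<dots> = perm_rep S r \<sigma> * Pprod (\<sigma> ` insert x T)"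
      using P_perm_rep[OF \<sigma> x(1)] Pprod_insert[OF \<sigma>T(1) x(2) \<sigma>T(2)] by (simp add: mult.assoc)
    finally show ?case .
  qed
qed

lemma perm_rep_transpose_P_P:
  "1 \<le> a \<Longrightarrow> a < b \<Longrightarrow> b \<le> r
     \<Longrightarrow> perm_rep S r (Transposition.transpose a b) * (P a * P b) = P a * P b"
proof (induction b)
  case 0
  then show ?case by simp
next
  case (Suc b)
  show ?case
  proof (cases "b = a")
    case True
    then show ?thesis
      using perm_rep_adj_swap_self[of a] S_P_P[of a] Suc.prems by (simp add: adj_swap_def)
  next
    case False
    then have ab: "a < b" and b: "1 \<le> b" "b < r" using Suc.prems by auto
    let ?t = "Transposition.transpose a b"
    have t: "?t permutes {1..r}" using ab b Suc.prems by (intro permutes_swap_id) auto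
    have sb: "adj_swap b permutes {1..r}" using adj_swap_permutes[OF b] .
    have "perm_rep S r (Transposition.transpose a (Suc b)) = S b * (perm_rep S r ?t * S b)"
      using perm_rep_comp[OF sb permutes_compose[OF t sb]] perm_rep_comp[OF t sb]
      by (simp add: transpose_Suc_conv[OF ab] perm_rep_adj_swap_self[OF b])
    moreover have Sb_Pa: "S b * P a = P a * S b" using S_P_far[OF b, of a] ab Suc.prems by auto
    moreover have "S b * P (Suc b) = P b * S b"
      using P_mult_S[of b b] b by (simp add: adj_swap_def)
    ultimately have "perm_rep S r (Transposition.transpose a (Suc b)) * (P a * P (Suc b))
        = S b * (perm_rep S r ?t * (P a * P b)) * S b"
      by (simp add: mult.assoc flip: mult.assoc[of "S b" "P a"])
    also have "\<dots> = P a * (S b * P b * S b)"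
      using Suc.IH Suc.prems(1) ab b Sb_Pa by (simp add: mult.assoc[symmetric])
    finally show ?thesis using S_P_S[OF b] by simp
  qed
qed

lemma perm_rep_Pprod:
  assumes \<rho>: "\<rho> permutes T" and T: "T \<subseteq> {1..r}"
  shows "perm_rep S r \<rho> * Pprod T = Pprod T"
proof -
  have "finite T" using T finite_subset by blast
  from \<rho> this show ?thesis
  proof (induction rule: permutes_induct)
    case id
    then show ?case using perm_rep_id[of S r] by (simp add: id_def)
  next
    case (swap a b p)
    let ?t = "Transposition.transpose a b"
    have p: "p permutes {1..r}" using swap T permutes_subset by blast
    have t: "?t permutes {1..r}" using swap T by (intro permutes_swap_id) auto
    have ab: "a \<in> {1..r}" "b \<in> {1..r}" using swap T by auto
    have rest: "T - {a, b} \<subseteq> {1..r}" "a \<notin> insert b (T - {a, b})" "b \<notin> T - {a, b}"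
      using T swap by auto
    have "insert a (insert b (T - {a, b})) = T" using swap by auto
    then have Pprod_T: "Pprod T = P a * P b * Pprod (T - {a, b})"
      using Pprod_insert[OF _ ab(1) rest(2)] Pprod_insert[OF rest(1) ab(2) rest(3)] rest(1) ab(2)
      by (simp add: mult.assoc)
    have t_P_P: "perm_rep S r ?t * (P a * P b) = P a * P b"
      using perm_rep_transpose_P_P[of a b] perm_rep_transpose_P_P[of b a] P_commute[OF ab] ab
        \<open>a \<noteq> b\<close> by (cases "a < b") (auto simp: transpose_commute)
    have "perm_rep S r (?t \<circ> p) * Pprod T
        = perm_rep S r p * (perm_rep S r ?t * (P a * P b)) * Pprod (T - {a, b})"
      using perm_rep_comp[OF p t] Pprod_T by (simp add: mult.assoc)
    also have "\<dots> = perm_rep S r p * Pprod T" using t_P_P Pprod_T by (simp add: mult.assoc)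
    finally have "perm_rep S r (?t \<circ> p) * Pprod T = perm_rep S r p * Pprod T" .
    then show ?case using swap by (simp only:)
  qed
qed

end

lemma finite_pperm: "finite (pperm r)"
proof (rule finite_subset)
  show "pperm r \<subseteq> (\<Union>A\<in>Pow {1..r}. {m. dom m = A \<and> ran m \<subseteq> {1..r}})"
    by (auto simp: pperm_def)
  show "finite (\<Union>A\<in>Pow {1..r}. {m :: nat \<rightharpoonup> nat. dom m = A \<and> ran m \<subseteq> {1..r}})"
    by (intro finite_UN_I finite_set_of_finite_maps) (auto dest: rev_finite_subset[OF finite_atLeastAtMost])
qed

lemma pcomp_pperm:
  assumes d1: "d1 \<in> pperm r" and d2: "d2 \<in> pperm r"
  shows "pcomp d1 d2 \<in> pperm r"
proof -
  have "dom (d2 \<circ>\<^sub>m d1) \<subseteq> dom d1" by (auto simp: map_comp_def split: option.splits)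
  moreover have "ran (d2 \<circ>\<^sub>m d1) \<subseteq> ran d2"
    by (auto simp: map_comp_def ran_def split: option.splits)
  moreover have "inj_on (d2 \<circ>\<^sub>m d1) (dom (d2 \<circ>\<^sub>m d1))"
  proof (rule inj_onI)
    fix x y assume "x \<in> dom (d2 \<circ>\<^sub>m d1)" "y \<in> dom (d2 \<circ>\<^sub>m d1)" and eq: "(d2 \<circ>\<^sub>m d1) x = (d2 \<circ>\<^sub>m d1) y"
    obtain u where u: "d1 x = Some u" "u \<in> dom d2"
      using \<open>x \<in> dom (d2 \<circ>\<^sub>m d1)\<close> by (force simp: map_comp_Some_iff)
    obtain v where v: "d1 y = Some v" "v \<in> dom d2"
      using \<open>y \<in> dom (d2 \<circ>\<^sub>m d1)\<close> by (force simp: map_comp_Some_iff)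
    have "d2 u = d2 v" using eq u v by simp
    then have "u = v" using u v d2 by (auto simp: pperm_def dest: inj_onD)
    then have "d1 x = d1 y" using u v by simp
    moreover have "inj_on d1 (dom d1)" using d1 by (simp add: pperm_def)
    ultimately show "x = y" using u v by (metis domI inj_onD)
  qed
  ultimately show ?thesis using assms by (auto simp: pperm_def pcomp_def)
qed

lemma pperm_extends_to_perm:
  assumes "d \<in> pperm r"
  obtains \<sigma> where "\<sigma> permutes {1..r}" and "d \<subseteq>\<^sub>m Some \<circ> \<sigma>"
proof -
  have sub: "dom d \<subseteq> {1..r}" "ran d \<subseteq> {1..r}" and inj: "inj_on d (dom d)"
    using assms by (auto simp: pperm_def)
  define f where "f = the \<circ> d"
  have d_f: "x \<in> dom d \<Longrightarrow> d x = Some (f x)" for x by (auto simp: f_def)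
  have "inj_on the (d ` dom d)" by (auto simp: inj_on_def)
  then have "bij_betw f (dom d) (ran d)"
    unfolding bij_betw_def f_def using comp_inj_on[OF inj] by (force simp: ran_def)
  moreover obtain g where "bij_betw g ({1..r} - dom d) ({1..r} - ran d)"
  proof -
    have "card (dom d) = card (ran d)" using bij_betw_same_card[OF \<open>bij_betw f (dom d) (ran d)\<close>] .
    then have "card ({1..r} - dom d) = card ({1..r} - ran d)"
      using sub by (simp add: card_Diff_subset finite_subset)
    then show thesis using that finite_same_card_bij by blast
  qed
  ultimately have "bij_betw (\<lambda>x. if x \<in> dom d then f x else g x) (dom d \<union> ({1..r} - dom d))
      (ran d \<union> ({1..r} - ran d))"
    by (rule bij_betw_disjoint_Un) auto
  moreover have "dom d \<union> ({1..r} - dom d) = {1..r}" "ran d \<union> ({1..r} - ran d) = {1..r}"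
    using sub by auto
  ultimately have "bij_betw (\<lambda>x. if x \<in> dom d then f x else if x \<in> {1..r} then g x else x) {1..r} {1..r}"
    by (auto elim!: bij_betw_cong[THEN iffD1, rotated])
  then have "(\<lambda>x. if x \<in> dom d then f x else if x \<in> {1..r} then g x else x) permutes {1..r}"
    by (rule bij_imp_permutes) (use sub in auto)
  moreover have "d \<subseteq>\<^sub>m Some \<circ> (\<lambda>x. if x \<in> dom d then f x else if x \<in> {1..r} then g x else x)"
    by (auto simp: map_le_def d_f)
  ultimately show thesis by (rule that)
qed

definition perm_ext :: "nat \<Rightarrow> (nat \<rightharpoonup> nat) \<Rightarrow> nat \<Rightarrow> nat" where
  "perm_ext r d = (SOME \<sigma>. \<sigma> permutes {1..r} \<and> d \<subseteq>\<^sub>m Some \<circ> \<sigma>)"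

lemma perm_ext:
  assumes "d \<in> pperm r"
  shows "perm_ext r d permutes {1..r}" and "d \<subseteq>\<^sub>m Some \<circ> perm_ext r d"
proof -
  have "\<exists>\<sigma>. \<sigma> permutes {1..r} \<and> d \<subseteq>\<^sub>m Some \<circ> \<sigma>"
    using pperm_extends_to_perm[OF assms] by blast
  then have "perm_ext r d permutes {1..r} \<and> d \<subseteq>\<^sub>m Some \<circ> perm_ext r d"
    unfolding perm_ext_def by (rule someI_ex)
  then show "perm_ext r d permutes {1..r}" and "d \<subseteq>\<^sub>m Some \<circ> perm_ext r d" by auto
qed

lemma ran_eq_image_dom: "d \<subseteq>\<^sub>m Some \<circ> \<sigma> \<Longrightarrow> ran d = \<sigma> ` dom d"
  by (force simp: map_le_def ran_def)

lemma pcomp_map_le: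
  assumes "d1 \<subseteq>\<^sub>m Some \<circ> \<sigma>1" and "d2 \<subseteq>\<^sub>m Some \<circ> \<sigma>2"
  shows "pcomp d1 d2 \<subseteq>\<^sub>m Some \<circ> (\<sigma>2 \<circ> \<sigma>1)"
  unfolding map_le_def
proof
  fix x assume "x \<in> dom (pcomp d1 d2)"
  then obtain u where "d1 x = Some u" "u \<in> dom d2"
    by (force simp: map_comp_Some_iff pcomp_def)
  then show "pcomp d1 d2 x = (Some \<circ> (\<sigma>2 \<circ> \<sigma>1)) x"
    using assms by (auto simp: map_le_def pcomp_def dom_def)
qed

lemma ran_pcomp: "d2 \<subseteq>\<^sub>m Some \<circ> \<sigma>2 \<Longrightarrow> ran (pcomp d1 d2) = \<sigma>2 ` (ran d1 \<inter> dom d2)"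
  by (force simp: map_le_def pcomp_def map_comp_def ran_def split: option.splits)

lemma compl_ran_pcomp:
  assumes \<sigma>2: "\<sigma>2 permutes {1..r}" and d2: "d2 \<subseteq>\<^sub>m Some \<circ> \<sigma>2"
  shows "{1..r} - ran (pcomp d1 d2) = \<sigma>2 ` ({1..r} - ran d1) \<union> ({1..r} - ran d2)"
proof -
  have inj: "inj \<sigma>2" and im: "\<sigma>2 ` {1..r} = {1..r}"
    using permutes_inj[OF \<sigma>2] permutes_image[OF \<sigma>2] .
  have "{1..r} - ran (pcomp d1 d2) = \<sigma>2 ` {1..r} - \<sigma>2 ` (ran d1 \<inter> dom d2)"
    using ran_pcomp[OF d2] im by simp
  also have "\<dots> = \<sigma>2 ` ({1..r} - (ran d1 \<inter> dom d2))" by (rule image_set_diff[OF inj, symmetric])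
  also have "{1..r} - (ran d1 \<inter> dom d2) = ({1..r} - ran d1) \<union> ({1..r} - dom d2)" by auto
  also have "\<sigma>2 ` \<dots> = \<sigma>2 ` ({1..r} - ran d1) \<union> \<sigma>2 ` ({1..r} - dom d2)" by (rule image_Un)
  also have "\<sigma>2 ` ({1..r} - dom d2) = {1..r} - ran d2"
    using ran_eq_image_dom[OF d2] image_set_diff[OF inj] im by simp
  finally show ?thesis .
qed

lemma card_compl_ran_pcomp:
  assumes \<sigma>2: "\<sigma>2 permutes {1..r}" and d2: "d2 \<subseteq>\<^sub>m Some \<circ> \<sigma>2"
    and "d1 \<in> pperm r" "d2 \<in> pperm r"
  shows "card (\<sigma>2 ` ({1..r} - ran d1) \<inter> ({1..r} - ran d2)) = pexp r d1 d2"
proof -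
  have inj: "inj \<sigma>2" and im: "\<sigma>2 ` {1..r} = {1..r}"
    using permutes_inj[OF \<sigma>2] permutes_image[OF \<sigma>2] .
  have "{1..r} - ran d2 = \<sigma>2 ` ({1..r} - dom d2)"
    using ran_eq_image_dom[OF d2] image_set_diff[OF inj] im by simp
  then have "\<sigma>2 ` ({1..r} - ran d1) \<inter> ({1..r} - ran d2) = \<sigma>2 ` ({1..r} - (ran d1 \<union> dom d2))"
    by (simp add: image_Int[OF inj, symmetric] Diff_Un)
  also have "card \<dots> = card ({1..r} - (ran d1 \<union> dom d2))"
    by (rule card_image[OF inj_on_subset[OF inj]]) simp
  also have "\<dots> = r - card (ran d1 \<union> dom d2)"
  proof -
    have sub: "ran d1 \<union> dom d2 \<subseteq> {1..r}" using assms(3,4) by (auto simp: pperm_def)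
    then have "finite (ran d1 \<union> dom d2)" using finite_subset by blast
    from card_Diff_subset[OF this sub] show ?thesis by simp
  qed
  finally show ?thesis by (simp add: pexp_def)
qed

definition perm_map :: "nat \<Rightarrow> (nat \<Rightarrow> nat) \<Rightarrow> nat \<rightharpoonup> nat" where
  "perm_map r \<sigma> x = (if x \<in> {1..r} then Some (\<sigma> x) else None)"

lemma dom_perm_map [simp]: "dom (perm_map r \<sigma>) = {1..r}"
  by (auto simp: perm_map_def split: if_splits)

lemma perm_map_map_le: "perm_map r \<sigma> \<subseteq>\<^sub>m Some \<circ> \<sigma>"
  by (simp add: map_le_def perm_map_def)

lemma ran_perm_map: "\<sigma> permutes {1..r} \<Longrightarrow> ran (perm_map r \<sigma>) = {1..r}"
  by (simp add: ran_eq_image_dom[OF perm_map_map_le] permutes_image)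

lemma perm_map_pperm: "\<sigma> permutes {1..r} \<Longrightarrow> perm_map r \<sigma> \<in> pperm r"
  by (auto simp: pperm_def ran_perm_map inj_on_def perm_map_def permutes_inj[THEN inj_eq])

lemma pcomp_perm_map:
  assumes "\<sigma> permutes {1..r}"
  shows "pcomp (perm_map r \<sigma>) (perm_map r \<tau>) = perm_map r (\<tau> \<circ> \<sigma>)"
  using permutes_in_image[OF assms] by (simp add: fun_eq_iff perm_map_def pcomp_def)

lemma sperm_eq_perm_map: "1 \<le> i \<Longrightarrow> i < r \<Longrightarrow> sperm r i = perm_map r (adj_swap i)"
  by (auto simp: fun_eq_iff sperm_def perm_map_def adj_swap_def Transposition.transpose_def)

lemma sperm_pperm: "1 \<le> i \<Longrightarrow> i < r \<Longrightarrow> sperm r i \<in> pperm r"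
  using perm_map_pperm[OF adj_swap_permutes] by (simp add: sperm_eq_perm_map)

lemma pid_eq_perm_map: "pid r = perm_map r id"
  by (simp add: fun_eq_iff pid_def perm_map_def)

definition pid_minus :: "nat \<Rightarrow> nat set \<Rightarrow> nat \<rightharpoonup> nat" where
  "pid_minus r T x = (if x \<in> {1..r} - T then Some x else None)"

lemma dom_pid_minus [simp]: "dom (pid_minus r T) = {1..r} - T"
  by (auto simp: pid_minus_def split: if_splits)

lemma pid_minus_map_le: "pid_minus r T \<subseteq>\<^sub>m Some \<circ> id"
  by (simp add: map_le_def pid_minus_def)

lemma ran_pid_minus [simp]: "ran (pid_minus r T) = {1..r} - T"
  using ran_eq_image_dom[OF pid_minus_map_le] by simp

lemma pid_minus_pperm: "pid_minus r T \<in> pperm r"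
  by (auto simp: pperm_def inj_on_def pid_minus_def)

lemma pid_minus_empty: "pid_minus r {} = pid r"
  by (simp add: fun_eq_iff pid_minus_def pid_def)

lemma pproj_eq_pid_minus: "pproj r j = pid_minus r {j}"
  by (simp add: fun_eq_iff pid_minus_def pproj_def)

lemma pcomp_pid_minus: "pcomp (pid_minus r A) (pid_minus r B) = pid_minus r (A \<union> B)"
  by (simp add: fun_eq_iff pid_minus_def pcomp_def map_comp_def)

lemma pcomp_perm_map_pid_minus:
  assumes \<sigma>: "\<sigma> permutes {1..r}" and d: "d \<subseteq>\<^sub>m Some \<circ> \<sigma>" "dom d \<subseteq> {1..r}"
  shows "pcomp (perm_map r \<sigma>) (pid_minus r ({1..r} - ran d)) = d"
proof
  fix x
  have "\<sigma> x \<in> ran d \<longleftrightarrow> x \<in> dom d"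
    using ran_eq_image_dom[OF d(1)] permutes_inj[OF \<sigma>] by (auto simp: inj_eq)
  moreover have "x \<in> {1..r} \<Longrightarrow> \<sigma> x \<in> {1..r}" using permutes_in_image[OF \<sigma>] by simp
  ultimately show "pcomp (perm_map r \<sigma>) (pid_minus r ({1..r} - ran d)) x = d x"
    using d by (auto simp: pcomp_def map_comp_def perm_map_def pid_minus_def map_le_def)
qed

context rook_gens
begin

definition rook_rep :: "(nat \<rightharpoonup> nat) \<Rightarrow> 'a" where
  "rook_rep d = perm_rep S r (perm_ext r d) * Pprod ({1..r} - ran d)"

lemma rook_rep_eq:
  assumes d: "d \<in> pperm r" and \<sigma>: "\<sigma> permutes {1..r}" and ext: "d \<subseteq>\<^sub>m Some \<circ> \<sigma>"
  shows "rook_rep d = perm_rep S r \<sigma> * Pprod ({1..r} - ran d)"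
proof -
  define \<sigma>0 where "\<sigma>0 = perm_ext r d"
  have \<sigma>0: "\<sigma>0 permutes {1..r}" "d \<subseteq>\<^sub>m Some \<circ> \<sigma>0" using perm_ext[OF d] by (simp_all add: \<sigma>0_def)
  define \<rho> where "\<rho> = \<sigma> \<circ> inv \<sigma>0"
  have \<rho>: "\<rho> permutes {1..r}" unfolding \<rho>_def using permutes_compose[OF permutes_inv[OF \<sigma>0(1)] \<sigma>] .
  have "\<rho> \<circ> \<sigma>0 = \<sigma>" unfolding \<rho>_def by (simp add: o_assoc[symmetric] permutes_inv_o(2)[OF \<sigma>0(1)])
  have "\<rho> y = y" if y: "y \<in> ran d" for y
  proof -
    obtain x where x: "d x = Some y" using y by (auto simp: ran_def)
    then have "\<sigma>0 x = y" "\<sigma> x = y" using \<sigma>0(2) ext by (auto simp: map_le_def dom_def)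
    then show ?thesis unfolding \<rho>_def using permutes_inverses(2)[OF \<sigma>0(1)] by (metis comp_apply)
  qed
  then have "\<rho> permutes ({1..r} - ran d)" by (intro permutes_superset[OF \<rho>]) auto
  then have "perm_rep S r \<rho> * Pprod ({1..r} - ran d) = Pprod ({1..r} - ran d)"
    by (rule perm_rep_Pprod) auto
  then show ?thesis
    using perm_rep_comp[OF \<sigma>0(1) \<rho>] \<open>\<rho> \<circ> \<sigma>0 = \<sigma>\<close> by (simp add: rook_rep_def \<sigma>0_def mult.assoc)
qed

lemma rook_rep_pcomp:
  assumes d1: "d1 \<in> pperm r" and d2: "d2 \<in> pperm r"
  shows "rook_rep d1 * rook_rep d2 = c ^ pexp r d1 d2 * rook_rep (pcomp d1 d2)"
proof -
  define \<sigma>1 \<sigma>2 where "\<sigma>1 = perm_ext r d1" and "\<sigma>2 = perm_ext r d2"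
  have \<sigma>1: "\<sigma>1 permutes {1..r}" "d1 \<subseteq>\<^sub>m Some \<circ> \<sigma>1" using perm_ext[OF d1] by (simp_all add: \<sigma>1_def)
  have \<sigma>2: "\<sigma>2 permutes {1..r}" "d2 \<subseteq>\<^sub>m Some \<circ> \<sigma>2" using perm_ext[OF d2] by (simp_all add: \<sigma>2_def)
  define T1 T2 where "T1 = {1..r} - ran d1" and "T2 = {1..r} - ran d2"
  have T: "T1 \<subseteq> {1..r}" "\<sigma>2 ` T1 \<subseteq> {1..r}" "T2 \<subseteq> {1..r}"
    using permutes_image[OF \<sigma>2(1)] by (auto simp: T1_def T2_def)
  have "rook_rep d1 * rook_rep d2 = perm_rep S r \<sigma>1 * (Pprod T1 * perm_rep S r \<sigma>2) * Pprod T2"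
    by (simp add: rook_rep_def \<sigma>1_def \<sigma>2_def T1_def T2_def mult.assoc)
  also have "\<dots> = perm_rep S r \<sigma>1 * perm_rep S r \<sigma>2 * (Pprod (\<sigma>2 ` T1) * Pprod T2)"
    using Pprod_perm_rep[OF T(1) \<sigma>2(1)] by (simp add: mult.assoc)
  also have "\<dots> = perm_rep S r (\<sigma>2 \<circ> \<sigma>1) * (c ^ pexp r d1 d2 * Pprod (\<sigma>2 ` T1 \<union> T2))"
    using Pprod_mult[OF T(2,3)] card_compl_ran_pcomp[OF \<sigma>2 d1 d2] perm_rep_comp[OF \<sigma>1(1) \<sigma>2(1)]
    by (simp add: T1_def T2_def)
  also have "\<dots> = c ^ pexp r d1 d2 * (perm_rep S r (\<sigma>2 \<circ> \<sigma>1) * Pprod (\<sigma>2 ` T1 \<union> T2))"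
    by (simp add: mult.assoc[symmetric] c_power_central)
  also have "perm_rep S r (\<sigma>2 \<circ> \<sigma>1) * Pprod (\<sigma>2 ` T1 \<union> T2) = rook_rep (pcomp d1 d2)"
    using rook_rep_eq[OF pcomp_pperm[OF d1 d2] permutes_compose[OF \<sigma>1(1) \<sigma>2(1)]
        pcomp_map_le[OF \<sigma>1(2) \<sigma>2(2)]] compl_ran_pcomp[OF \<sigma>2]
    by (simp add: T1_def T2_def)
  finally show ?thesis .
qed

lemma rook_rep_perm_map:
  assumes "\<sigma> permutes {1..r}"
  shows "rook_rep (perm_map r \<sigma>) = perm_rep S r \<sigma>"
  using rook_rep_eq[OF perm_map_pperm[OF assms] assms perm_map_map_le] by (simp add: ran_perm_map[OF assms])

lemma rook_rep_pid_minus: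
  assumes "T \<subseteq> {1..r}"
  shows "rook_rep (pid_minus r T) = Pprod T"
proof -
  have "{1..r} - ({1..r} - T) = T" using assms by auto
  then show ?thesis
    using rook_rep_eq[OF pid_minus_pperm[of r T] permutes_id pid_minus_map_le] by simp
qed

end

lemma bas_PA: "d \<in> pperm r \<Longrightarrow> bas d \<in> PA r"
  by (auto simp: PA_def bas_def)

lemma pmult_bas:
  assumes "d1 \<in> pperm r" and "d2 \<in> pperm r"
  shows "pmult r z (bas d1) (bas d2) = (\<lambda>e. z ^ pexp r d1 d2 * bas (pcomp d1 d2) e)"
proof
  fix e
  have "pmult r z (bas d1) (bas d2) e = (\<Sum>a\<in>pperm r. if a = d1 then \<Sum>b\<in>pperm r. if b = d2
      then (if pcomp a b = e then z ^ pexp r a b else 0) else 0 else 0)"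
    unfolding pmult_def bas_def by (intro sum.cong refl) (auto intro!: sum.cong sum.neutral)
  then show "pmult r z (bas d1) (bas d2) e = z ^ pexp r d1 d2 * bas (pcomp d1 d2) e"
    using assms finite_pperm[of r] by (simp add: bas_def)
qed

lemma pmult_bas_cover:
  assumes "d1 \<in> pperm r" and "d2 \<in> pperm r" and "{1..r} \<subseteq> ran d1 \<union> dom d2"
  shows "pmult r z (bas d1) (bas d2) = bas (pcomp d1 d2)"
proof -
  have "ran d1 \<union> dom d2 = {1..r}" using assms by (auto simp: pperm_def)
  then show ?thesis using pmult_bas[OF assms(1,2)] by (simp add: pexp_def)
qed

lemma pmult_bas_perm_map:
  assumes "\<sigma> permutes {1..r}" and "\<tau> permutes {1..r}"
  shows "pmult r z (bas (perm_map r \<sigma>)) (bas (perm_map r \<tau>)) = bas (perm_map r (\<tau> \<circ> \<sigma>))"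
  using pmult_bas_cover[OF perm_map_pperm[OF assms(1)] perm_map_pperm[OF assms(2)]]
  by (simp add: ran_perm_map[OF assms(1)] pcomp_perm_map[OF assms(1)])

lemma pmult_bas_pid_minus:
  "pmult r z (bas (pid_minus r A)) (bas (pid_minus r B))
     = (\<lambda>e. z ^ card ({1..r} \<inter> A \<inter> B) * bas (pid_minus r (A \<union> B)) e)"
proof -
  have "({1..r} - A) \<union> ({1..r} - B) = {1..r} - ({1..r} \<inter> A \<inter> B)" by auto
  moreover have "card ({1..r} - ({1..r} \<inter> A \<inter> B)) = r - card ({1..r} \<inter> A \<inter> B)"
    by (subst card_Diff_subset) auto
  moreover have "card ({1..r} \<inter> A \<inter> B) \<le> card {1..r}" by (rule card_mono) auto
  ultimately have "pexp r (pid_minus r A) (pid_minus r B) = card ({1..r} \<inter> A \<inter> B)"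
    by (simp add: pexp_def)
  then show ?thesis by (simp add: pmult_bas pid_minus_pperm pcomp_pid_minus)
qed

lemma PA_decomp: "f \<in> PA r \<Longrightarrow> f = (\<lambda>e. \<Sum>d\<in>pperm r. f d * bas d e)"
proof
  fix e assume "f \<in> PA r"
  have "(\<Sum>d\<in>pperm r. f d * bas d e) = (\<Sum>d\<in>pperm r. if e = d then f e else 0)"
    by (intro sum.cong refl) (simp add: bas_def)
  then show "f e = (\<Sum>d\<in>pperm r. f d * bas d e)"
    using \<open>f \<in> PA r\<close> finite_pperm[of r] by (auto simp: PA_def)
qed

lemma PA_pproj_idem:
  "j \<in> {1..r} \<Longrightarrow> pmult r z (bas (pproj r j)) (bas (pproj r j)) = (\<lambda>e. z * bas (pproj r j) e)"
  by (simp add: pproj_eq_pid_minus pmult_bas_pid_minus)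

lemma PA_pproj_commute:
  "pmult r z (bas (pproj r i)) (bas (pproj r j)) = pmult r z (bas (pproj r j)) (bas (pproj r i))"
  by (simp add: pproj_eq_pid_minus pmult_bas_pid_minus Int_commute Un_commute Int_left_commute)

lemma pmult_sperm_sperm:
  "1 \<le> i \<Longrightarrow> i < r \<Longrightarrow> 1 \<le> j \<Longrightarrow> j < r \<Longrightarrow>
     pmult r z (bas (sperm r i)) (bas (sperm r j)) = bas (perm_map r (adj_swap j \<circ> adj_swap i))"
  using pmult_bas_perm_map[OF adj_swap_permutes adj_swap_permutes] by (simp add: sperm_eq_perm_map)

lemma PA_sperm_sq:
  assumes "1 \<le> i" and "i < r"
  shows "pmult r z (bas (sperm r i)) (bas (sperm r i)) = bas (pid r)"
proof -
  have "adj_swap i \<circ> adj_swap i = id" by (simp add: fun_eq_iff adj_swap_def)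
  then show ?thesis using assms by (simp add: pmult_sperm_sperm pid_eq_perm_map)
qed

lemma PA_sperm_braid:
  assumes "1 \<le> i" and "Suc i < r"
  shows "pmult r z (pmult r z (bas (sperm r i)) (bas (sperm r (Suc i)))) (bas (sperm r i))
    = pmult r z (pmult r z (bas (sperm r (Suc i))) (bas (sperm r i))) (bas (sperm r (Suc i)))"
proof -
  have s: "adj_swap i permutes {1..r}" "adj_swap (Suc i) permutes {1..r}"
    using adj_swap_permutes[of i r] adj_swap_permutes[of "Suc i" r] assms by auto
  have "adj_swap i \<circ> (adj_swap (Suc i) \<circ> adj_swap i) = adj_swap (Suc i) \<circ> (adj_swap i \<circ> adj_swap (Suc i))"
    by (auto simp: fun_eq_iff adj_swap_def Transposition.transpose_def)
  then show ?thesis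
    using assms s by (simp add: pmult_sperm_sperm pmult_bas_perm_map permutes_compose sperm_eq_perm_map)
qed

lemma PA_sperm_far:
  "1 \<le> i \<Longrightarrow> 1 \<le> j \<Longrightarrow> i < r \<Longrightarrow> j < r \<Longrightarrow> Suc i < j \<or> Suc j < i
     \<Longrightarrow> pmult r z (bas (sperm r i)) (bas (sperm r j)) = pmult r z (bas (sperm r j)) (bas (sperm r i))"
  by (simp add: pmult_sperm_sperm, rule arg_cong[where f = "\<lambda>\<sigma>. bas (perm_map r \<sigma>)"])
    (auto simp: fun_eq_iff adj_swap_def Transposition.transpose_def)

lemma pmult_sperm_bas:
  assumes "1 \<le> i" and "i < r" and "d \<in> pperm r"
  shows "pmult r z (bas (sperm r i)) (bas d) = bas (pcomp (sperm r i) d)"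
  using pmult_bas_cover[OF perm_map_pperm[OF adj_swap_permutes] assms(3)] ran_perm_map[OF adj_swap_permutes]
    assms(1,2) by (simp add: sperm_eq_perm_map)

lemma pmult_bas_sperm:
  assumes "1 \<le> i" and "i < r" and "d \<in> pperm r"
  shows "pmult r z (bas d) (bas (sperm r i)) = bas (pcomp d (sperm r i))"
  using pmult_bas_cover[OF assms(3) perm_map_pperm[OF adj_swap_permutes]] assms(1,2)
  by (simp add: sperm_eq_perm_map)

lemma PA_sperm_pproj_pproj:
  assumes "1 \<le> i" and "i < r"
  shows "pmult r z (bas (sperm r i)) (pmult r z (bas (pproj r i)) (bas (pproj r (Suc i))))
           = pmult r z (bas (pproj r i)) (bas (pproj r (Suc i)))"
    and "pmult r z (pmult r z (bas (pproj r i)) (bas (pproj r (Suc i)))) (bas (sperm r i))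
           = pmult r z (bas (pproj r i)) (bas (pproj r (Suc i)))"
proof -
  have pp: "pmult r z (bas (pproj r i)) (bas (pproj r (Suc i))) = bas (pid_minus r {i, Suc i})"
    by (simp add: pproj_eq_pid_minus pmult_bas_pid_minus insert_commute)
  have "pcomp (sperm r i) (pid_minus r {i, Suc i}) = pid_minus r {i, Suc i}"
    "pcomp (pid_minus r {i, Suc i}) (sperm r i) = pid_minus r {i, Suc i}"
    by (auto simp: fun_eq_iff pcomp_def map_comp_def sperm_def pid_minus_def)
  then show "pmult r z (bas (sperm r i)) (pmult r z (bas (pproj r i)) (bas (pproj r (Suc i))))
           = pmult r z (bas (pproj r i)) (bas (pproj r (Suc i)))"
    and "pmult r z (pmult r z (bas (pproj r i)) (bas (pproj r (Suc i)))) (bas (sperm r i))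
           = pmult r z (bas (pproj r i)) (bas (pproj r (Suc i)))"
    using assms by (simp_all add: pp pmult_sperm_bas pmult_bas_sperm pid_minus_pperm)
qed

lemma PA_sperm_pproj_sperm:
  assumes "1 \<le> i" and "i < r"
  shows "pmult r z (pmult r z (bas (sperm r i)) (bas (pproj r i))) (bas (sperm r i)) = bas (pproj r (Suc i))"
proof -
  have "pcomp (pcomp (sperm r i) (pproj r i)) (sperm r i) = pproj r (Suc i)"
    using assms by (auto simp: fun_eq_iff pcomp_def map_comp_def pproj_def sperm_def)
  then show ?thesis
    using assms by (simp add: pmult_sperm_bas pmult_bas_sperm pcomp_pperm sperm_pperm pproj_eq_pid_minus
        pid_minus_pperm)
qed

lemma PA_sperm_pproj_commute:
  assumes "1 \<le> i" and "i < r" and "j \<noteq> i" and "j \<noteq> Suc i"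
  shows "pmult r z (bas (sperm r i)) (bas (pproj r j)) = pmult r z (bas (pproj r j)) (bas (sperm r i))"
proof -
  have "pcomp (sperm r i) (pproj r j) = pcomp (pproj r j) (sperm r i)"
    using assms by (auto simp: fun_eq_iff pcomp_def map_comp_def pproj_def sperm_def)
  then show ?thesis
    using assms by (simp add: pmult_sperm_bas pmult_bas_sperm pproj_eq_pid_minus pid_minus_pperm)
qed

lemma PA_rels: "rels r (pmult r z) (bas (pid r)) (\<lambda>f e. z * f e) (\<lambda>i. bas (sperm r i)) (\<lambda>j. bas (pproj r j))"
  unfolding rels_def
  by (auto simp: PA_pproj_idem PA_pproj_commute PA_sperm_sq PA_sperm_braid PA_sperm_far
      PA_sperm_pproj_pproj PA_sperm_pproj_sperm PA_sperm_pproj_commute)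

lemma PA_hom_zero:
  assumes "PA_hom r z \<iota> \<psi>"
  shows "\<psi> (\<lambda>e. 0) = 0"
proof -
  have zero: "(\<lambda>e::nat \<rightharpoonup> nat. 0::complex) \<in> PA r" by (simp add: PA_def)
  have "\<forall>f\<in>PA r. \<forall>g\<in>PA r. \<psi> (\<lambda>e. f e + g e) = \<psi> f + \<psi> g"
    using assms by (simp add: PA_hom_def)
  from bspec[OF bspec[OF this zero] zero] show ?thesis by simp
qed

lemma PA_hom_sum:
  assumes hom: "PA_hom r z \<iota> \<psi>" and "finite D" and "\<forall>d\<in>D. g d \<in> PA r"
  shows "\<psi> (\<lambda>e. \<Sum>d\<in>D. g d e) = (\<Sum>d\<in>D. \<psi> (g d))"
  using assms(2,3)
proof (induction D rule: finite_induct)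
  case empty
  then show ?case using PA_hom_zero[OF hom] by simp
next
  case (insert x D)
  have "(\<lambda>e. \<Sum>d\<in>D. g d e) \<in> PA r" using insert.prems by (auto simp: PA_def)
  then show ?case using insert hom by (simp add: PA_hom_def)
qed

lemma PA_hom_expand:
  assumes hom: "PA_hom r z \<iota> \<psi>" and f: "f \<in> PA r"
  shows "\<psi> f = (\<Sum>d\<in>pperm r. \<iota> (f d) * \<psi> (bas d))"
proof -
  have "\<psi> f = \<psi> (\<lambda>e. \<Sum>d\<in>pperm r. f d * bas d e)" using PA_decomp[OF f] by simp
  also have "\<dots> = (\<Sum>d\<in>pperm r. \<psi> (\<lambda>e. f d * bas d e))"
    by (rule PA_hom_sum[OF hom finite_pperm]) (auto simp: PA_def bas_def)
  also have "\<dots> = (\<Sum>d\<in>pperm r. \<iota> (f d) * \<psi> (bas d))"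
    using hom by (intro sum.cong refl) (simp add: PA_hom_def bas_PA)
  finally show ?thesis .
qed

locale rook_alg = rook_gens r S P "\<iota> z"
  for r :: nat and S P :: "nat \<Rightarrow> 'a::ring_1" and \<iota> :: "complex \<Rightarrow> 'a" and z :: complex +
  assumes cplx_alg: "cplx_alg \<iota>"
begin

lemma iota_add: "\<iota> (a + b) = \<iota> a + \<iota> b"
  and iota_mult: "\<iota> (a * b) = \<iota> a * \<iota> b"
  and iota_one: "\<iota> 1 = 1"
  and iota_central: "\<iota> a * x = x * \<iota> a"
  using cplx_alg unfolding cplx_alg_def by blast+

lemma iota_zero: "\<iota> 0 = 0"
  using iota_add[of 0 0] by simp

lemma iota_sum: "\<iota> (sum f A) = (\<Sum>x\<in>A. \<iota> (f x))"
  by (induction A rule: infinite_finite_induct) (simp_all add: iota_zero iota_add)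

lemma iota_power: "\<iota> (a ^ n) = \<iota> a ^ n"
  by (induction n) (simp_all add: iota_one iota_mult)

definition phi :: "((nat \<rightharpoonup> nat) \<Rightarrow> complex) \<Rightarrow> 'a" where
  "phi f = (\<Sum>d\<in>pperm r. \<iota> (f d) * rook_rep d)"

lemma phi_bas:
  assumes "d \<in> pperm r"
  shows "phi (bas d) = rook_rep d"
proof -
  have "phi (bas d) = (\<Sum>e\<in>pperm r. if e = d then rook_rep e else 0)"
    unfolding phi_def by (intro sum.cong refl) (simp add: bas_def iota_one iota_zero)
  then show ?thesis using assms finite_pperm[of r] by (simp add: sum.delta')
qed

lemma phi_add: "phi (\<lambda>e. f e + g e) = phi f + phi g"
  by (simp add: phi_def iota_add distrib_right sum.distrib)

lemma phi_smult: "phi (\<lambda>e. a * f e) = \<iota> a * phi f"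
  by (simp add: phi_def iota_mult sum_distrib_left mult.assoc)

lemma scaled_rook_rep_mult:
  assumes "d1 \<in> pperm r" and "d2 \<in> pperm r"
  shows "\<iota> a * rook_rep d1 * (\<iota> b * rook_rep d2) = \<iota> (z ^ pexp r d1 d2 * a * b) * rook_rep (pcomp d1 d2)"
proof -
  have "\<iota> a * rook_rep d1 * (\<iota> b * rook_rep d2) = \<iota> a * (rook_rep d1 * \<iota> b) * rook_rep d2"
    by (simp add: mult.assoc)
  also have "\<dots> = \<iota> (a * b) * (rook_rep d1 * rook_rep d2)"
    by (simp only: iota_central[of b "rook_rep d1", symmetric] iota_mult mult.assoc)
  also have "\<dots> = \<iota> (z ^ pexp r d1 d2 * a * b) * rook_rep (pcomp d1 d2)"
    using rook_rep_pcomp[OF assms] by (simp add: iota_mult iota_power mult_ac)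
  finally show ?thesis .
qed

lemma phi_pmult: "phi (pmult r z f g) = phi f * phi g"
proof -
  have "phi (pmult r z f g) = (\<Sum>e\<in>pperm r. \<Sum>d1\<in>pperm r. \<Sum>d2\<in>pperm r.
      if pcomp d1 d2 = e then \<iota> (z ^ pexp r d1 d2 * f d1 * g d2) * rook_rep e else 0)"
    unfolding phi_def pmult_def
  proof (intro sum.cong refl)
    fix e
    have "\<iota> (if pcomp d1 d2 = e then z ^ pexp r d1 d2 * f d1 * g d2 else 0) * rook_rep e
        = (if pcomp d1 d2 = e then \<iota> (z ^ pexp r d1 d2 * f d1 * g d2) * rook_rep e else 0)" for d1 d2
      by (simp add: iota_zero)
    then show "\<iota> (\<Sum>d1\<in>pperm r. \<Sum>d2\<in>pperm r. if pcomp d1 d2 = e then z ^ pexp r d1 d2 * f d1 * g d2 else 0)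
        * rook_rep e = (\<Sum>d1\<in>pperm r. \<Sum>d2\<in>pperm r.
          if pcomp d1 d2 = e then \<iota> (z ^ pexp r d1 d2 * f d1 * g d2) * rook_rep e else 0)"
      by (simp add: iota_sum sum_distrib_right)
  qed
  also have "\<dots> = (\<Sum>d1\<in>pperm r. \<Sum>d2\<in>pperm r. \<Sum>e\<in>pperm r.
      if pcomp d1 d2 = e then \<iota> (z ^ pexp r d1 d2 * f d1 * g d2) * rook_rep e else 0)"
    by (subst sum.swap) (rule sum.cong[OF refl], rule sum.swap)
  also have "\<dots> = (\<Sum>d1\<in>pperm r. \<Sum>d2\<in>pperm r. \<iota> (z ^ pexp r d1 d2 * f d1 * g d2) * rook_rep (pcomp d1 d2))"
    using finite_pperm[of r] pcomp_pperm by (simp add: sum.delta)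
  also have "\<dots> = (\<Sum>d1\<in>pperm r. \<Sum>d2\<in>pperm r. \<iota> (f d1) * rook_rep d1 * (\<iota> (g d2) * rook_rep d2))"
    by (intro sum.cong refl) (simp add: scaled_rook_rep_mult)
  also have "\<dots> = phi f * phi g" unfolding phi_def by (simp add: sum_product)
  finally show ?thesis .
qed

lemma phi_PA_hom: "PA_hom r z \<iota> phi"
proof -
  have "phi (bas (pid r)) = 1"
    using phi_bas[OF perm_map_pperm] rook_rep_perm_map[OF permutes_id]
    by (simp add: pid_eq_perm_map permutes_id)
  then show ?thesis unfolding PA_hom_def by (simp add: phi_add phi_smult phi_pmult)
qed

lemma phi_sperm: "1 \<le> i \<Longrightarrow> i < r \<Longrightarrow> phi (bas (sperm r i)) = S i"
  using phi_bas[OF sperm_pperm] rook_rep_perm_map[OF adj_swap_permutes]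
  by (simp add: sperm_eq_perm_map perm_rep_adj_swap_self)

lemma phi_pproj:
  assumes "j \<in> {1..r}"
  shows "phi (bas (pproj r j)) = P j"
  using phi_bas[OF pid_minus_pperm] rook_rep_pid_minus[of "{j}"] Pprod_insert[of "{}" j] assms
  by (simp add: pproj_eq_pid_minus)

context
  fixes \<psi> :: "((nat \<rightharpoonup> nat) \<Rightarrow> complex) \<Rightarrow> 'a"
  assumes hom: "PA_hom r z \<iota> \<psi>"
    and \<psi>_sperm: "\<forall>i\<in>{1..r-1}. \<psi> (bas (sperm r i)) = S i"
    and \<psi>_pproj: "\<forall>j\<in>{1..r}. \<psi> (bas (pproj r j)) = P j"
begin

lemma hom_pmult_bas: "d1 \<in> pperm r \<Longrightarrow> d2 \<in> pperm r \<Longrightarrow> \<psi> (pmult r z (bas d1) (bas d2)) = \<psi> (bas d1) * \<psi> (bas d2)"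
  using hom by (simp add: PA_hom_def bas_PA)

lemma hom_perm_map: "\<sigma> permutes {1..r} \<Longrightarrow> \<psi> (bas (perm_map r \<sigma>)) = perm_rep S r \<sigma>"
proof (induction rule: permutes_adj_swap_induct)
  case id
  have "\<psi> (bas (pid r)) = 1" using hom by (simp add: PA_hom_def)
  then show ?case using perm_rep_id[of S r] by (simp add: pid_eq_perm_map id_def)
next
  case (adj_swap p i)
  have "bas (perm_map r (adj_swap i \<circ> p)) = pmult r z (bas (perm_map r p)) (bas (sperm r i))"
    using pmult_bas_perm_map[OF adj_swap(1) adj_swap_permutes[OF adj_swap(2,3)]] adj_swap(2,3)
    by (simp add: sperm_eq_perm_map)
  then have "\<psi> (bas (perm_map r (adj_swap i \<circ> p))) = perm_rep S r p * S i"
    using hom_pmult_bas[OF perm_map_pperm[OF adj_swap(1)] sperm_pperm[OF adj_swap(2,3)]] adj_swap \<psi>_sperm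
    by simp
  then show ?case using perm_rep_adj_swap[OF order_refl adj_swap(1-3)] by (simp only:)
qed

lemma hom_pid_minus:
  assumes "T \<subseteq> {1..r}"
  shows "\<psi> (bas (pid_minus r T)) = Pprod T"
proof -
  have "finite T" using assms finite_subset by blast
  from this assms show ?thesis
  proof (induction T rule: finite_induct)
    case empty
    show ?case using hom by (simp add: PA_hom_def pid_minus_empty)
  next
    case (insert j T)
    have "bas (pid_minus r (insert j T)) = pmult r z (bas (pproj r j)) (bas (pid_minus r T))"
      using insert by (simp add: pproj_eq_pid_minus pmult_bas_pid_minus)
    then show ?case using insert hom_pmult_bas[OF pid_minus_pperm pid_minus_pperm] \<psi>_pproj
      by (auto simp: Pprod_insert pproj_eq_pid_minus)
  qed
qed

lemma hom_bas:
  assumes d: "d \<in> pperm r"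
  shows "\<psi> (bas d) = rook_rep d"
proof -
  define \<sigma> where "\<sigma> = perm_ext r d"
  have \<sigma>: "\<sigma> permutes {1..r}" "d \<subseteq>\<^sub>m Some \<circ> \<sigma>" using perm_ext[OF d] by (simp_all add: \<sigma>_def)
  have "bas d = pmult r z (bas (perm_map r \<sigma>)) (bas (pid_minus r ({1..r} - ran d)))"
    using pmult_bas_cover[OF perm_map_pperm[OF \<sigma>(1)] pid_minus_pperm] ran_perm_map[OF \<sigma>(1)]
      pcomp_perm_map_pid_minus[OF \<sigma>] d by (simp add: pperm_def)
  then show ?thesis
    using hom_pmult_bas[OF perm_map_pperm[OF \<sigma>(1)] pid_minus_pperm] hom_perm_map[OF \<sigma>(1)]
      hom_pid_minus[of "{1..r} - ran d"] by (simp add: rook_rep_def \<sigma>_def)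
qed

lemma hom_eq_phi: "f \<in> PA r \<Longrightarrow> \<psi> f = phi f"
  using PA_hom_expand[OF hom] PA_hom_expand[OF phi_PA_hom] by (simp add: hom_bas phi_bas)

end

lemma PA_universal:
  "\<exists>\<phi>. PA_hom r z \<iota> \<phi> \<and> (\<forall>i\<in>{1..r-1}. \<phi> (bas (sperm r i)) = S i) \<and> (\<forall>j\<in>{1..r}. \<phi> (bas (pproj r j)) = P j)
     \<and> (\<forall>\<psi>. PA_hom r z \<iota> \<psi> \<and> (\<forall>i\<in>{1..r-1}. \<psi> (bas (sperm r i)) = S i)
           \<and> (\<forall>j\<in>{1..r}. \<psi> (bas (pproj r j)) = P j) \<longrightarrow> (\<forall>f\<in>PA r. \<psi> f = \<phi> f))"
proof (intro exI[of _ phi] conjI allI impI ballI)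
  show "PA_hom r z \<iota> phi" by (rule phi_PA_hom)
next
  fix i assume "i \<in> {1..r-1}"
  then show "phi (bas (sperm r i)) = S i" by (intro phi_sperm) auto
next
  fix j assume "j \<in> {1..r}"
  then show "phi (bas (pproj r j)) = P j" by (rule phi_pproj)
next
  fix \<psi> f
  assume "PA_hom r z \<iota> \<psi> \<and> (\<forall>i\<in>{1..r-1}. \<psi> (bas (sperm r i)) = S i)
    \<and> (\<forall>j\<in>{1..r}. \<psi> (bas (pproj r j)) = P j)" and "f \<in> PA r"
  then show "\<psi> f = phi f" using hom_eq_phi by blast
qed

end

lemma rels_imp_rook_gens:
  fixes S P :: "nat \<Rightarrow> 'a::monoid_mult"
  assumes "rels r (*) 1 (\<lambda>x. c * x) S P" and "\<And>x. c * x = x * c"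
  shows "rook_gens r S P c"
proof (intro rook_gens.intro coxeter_gens.intro rook_gens_axioms.intro)
  fix i j
  show "j \<in> {1..r} \<Longrightarrow> P j * P j = c * P j"
    and "1 \<le> i \<Longrightarrow> i < r \<Longrightarrow> S i * S i = 1"
    and "1 \<le> i \<Longrightarrow> Suc i < r \<Longrightarrow> S i * S (Suc i) * S i = S (Suc i) * S i * S (Suc i)"
    and "1 \<le> i \<Longrightarrow> Suc i < j \<Longrightarrow> j < r \<Longrightarrow> S i * S j = S j * S i"
    and "1 \<le> i \<Longrightarrow> i < r \<Longrightarrow> S i * (P i * P (Suc i)) = P i * P (Suc i)"
    and "1 \<le> i \<Longrightarrow> i < r \<Longrightarrow> S i * P i * S i = P (Suc i)"
    and "1 \<le> i \<Longrightarrow> i < r \<Longrightarrow> j \<in> {1..r} \<Longrightarrow> j \<noteq> i \<Longrightarrow> j \<noteq> Suc i \<Longrightarrow> S i * P j = P j * S i"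
    using assms(1) unfolding rels_def by auto
  show "i \<in> {1..r} \<Longrightarrow> j \<in> {1..r} \<Longrightarrow> P i * P j = P j * P i"
    using assms(1) unfolding rels_def by (cases "i = j") auto
qed (rule assms(2))

lemma rels_imp_rook_alg:
  assumes "cplx_alg \<iota>" and "rels r (*) 1 (\<lambda>x. \<iota> z * x) S P"
  shows "rook_alg r S P \<iota> z"
proof -
  have "\<iota> z * x = x * \<iota> z" for x using assms(1) unfolding cplx_alg_def by blast
  then show ?thesis
    using rook_alg.intro[OF rels_imp_rook_gens[OF assms(2)] rook_alg_axioms.intro[OF assms(1)]] by blast
qed

theorem theorem8p6:
  fixes r :: nat and z :: complex
    and \<iota> :: "complex \<Rightarrow> 'a::ring_1" and S P :: "nat \<Rightarrow> 'a"
  assumes "r \<ge> 1" and "z \<noteq> 0"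
  shows "rels r (pmult r z) (bas (pid r)) (\<lambda>f e. z * f e)
            (\<lambda>i. bas (sperm r i)) (\<lambda>j. bas (pproj r j))
       \<and> (cplx_alg \<iota> \<and> rels r (*) 1 (\<lambda>x. \<iota> z * x) S P \<longrightarrow>
            (\<exists>\<phi>. PA_hom r z \<iota> \<phi>
                 \<and> (\<forall>i\<in>{1..r-1}. \<phi> (bas (sperm r i)) = S i)
                 \<and> (\<forall>j\<in>{1..r}. \<phi> (bas (pproj r j)) = P j)
                 \<and> (\<forall>\<psi>. PA_hom r z \<iota> \<psi>
                        \<and> (\<forall>i\<in>{1..r-1}. \<psi> (bas (sperm r i)) = S i)
                        \<and> (\<forall>j\<in>{1..r}. \<psi> (bas (pproj r j)) = P j)
                      \<longrightarrow> (\<forall>f\<in>PA r. \<psi> f = \<phi> f))))"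
proof -
  show ?thesis using PA_rels rook_alg.PA_universal[OF rels_imp_rook_alg] by blast
qed

end
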